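(* The space $(\mathbb{R}^{\mathbb{Z}_<},\tau_\iota)$ is first-countable but not second-countable.
   Context: $\mathbb{R}^{\mathbb{Z}_<}$ is the set of formal series $\sum_{i\ge -k}a_i\epsilon^i$ ($k\in\mathbb{N}\cup\{0\}$, $a_i\in\mathbb{R}$), with coefficientwise addition, Cauchy-product multiplication and lexicographic order; $|\cdot|$ is the associated absolute value, $d(\mathbf{x},\mathbf{y})=|\mathbf{y}-\mathbf{x}|$, $B_{\mathbf{x}}(\mathbf{y})=\{\mathbf{z}:d(\mathbf{x},\mathbf{z})<\mathbf{y}\}$. For $m\in\mathbb{N}\cup\{0\}$ let $\Delta^m=\{a\epsilon^m: a\in\mathbb{R}\}$ (with $a\neq0$ when $m\ge1$) and $\Delta^{\downarrow m}=\bigcup_{n\ge m}\Delta^n$. A set $O$ is $\iota$-open iff for every $\mathbf{x}\in O$ there is a positive $\iota\in\Delta^{\downarrow m}$ (for some $m$) with $B_{\mathbf{x}}(\iota)\subseteq O$; $\tau_\iota$ is the topology generated by unions of such $\iota$-balls. *)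

theory Defs
  imports "HOL-Analysis.Analysis"
begin

text \<open>Elements of R^{Z_<}: formal series sum_{i >= -k} a_i eps^i, represented by their
  coefficient function int => real whose support is bounded below.\<close>

definition LC :: "(int \<Rightarrow> real) set" where
  "LC = {f. \<exists>k::nat. \<forall>i::int. i < - int k \<longrightarrow> f i = 0}"

definition lc_minus :: "(int \<Rightarrow> real) \<Rightarrow> (int \<Rightarrow> real) \<Rightarrow> (int \<Rightarrow> real)" where
  "lc_minus x y = (\<lambda>i. x i - y i)"

definition lc_uminus :: "(int \<Rightarrow> real) \<Rightarrow> (int \<Rightarrow> real)" where
  "lc_uminus x = (\<lambda>i. - x i)"

definition lc_pos :: "(int \<Rightarrow> real) \<Rightarrow> bool" where
  "lc_pos x \<longleftrightarrow> (\<exists>i. 0 < x i \<and> (\<forall>j<i. x j = 0))"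

definition lc_less :: "(int \<Rightarrow> real) \<Rightarrow> (int \<Rightarrow> real) \<Rightarrow> bool" where
  "lc_less x y \<longleftrightarrow> lc_pos (lc_minus y x)"

definition lc_abs :: "(int \<Rightarrow> real) \<Rightarrow> (int \<Rightarrow> real)" where
  "lc_abs x = (if lc_pos (lc_uminus x) then lc_uminus x else x)"

definition lc_dist :: "(int \<Rightarrow> real) \<Rightarrow> (int \<Rightarrow> real) \<Rightarrow> (int \<Rightarrow> real)" where
  "lc_dist x y = lc_abs (lc_minus y x)"

definition lc_ball :: "(int \<Rightarrow> real) \<Rightarrow> (int \<Rightarrow> real) \<Rightarrow> (int \<Rightarrow> real) set" where
  "lc_ball x r = {z \<in> LC. lc_less (lc_dist x z) r}"

definition lc_mono :: "real \<Rightarrow> int \<Rightarrow> (int \<Rightarrow> real)" where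
  "lc_mono a m = (\<lambda>i. if i = m then a else 0)"

definition Delta :: "nat \<Rightarrow> (int \<Rightarrow> real) set" where
  "Delta m = {lc_mono a (int m) | a. m \<ge> 1 \<longrightarrow> a \<noteq> 0}"

definition Delta_down :: "nat \<Rightarrow> (int \<Rightarrow> real) set" where
  "Delta_down m = (\<Union>n\<in>{m..}. Delta n)"

definition iota_open :: "(int \<Rightarrow> real) set \<Rightarrow> bool" where
  "iota_open U \<longleftrightarrow> U \<subseteq> LC \<and>
     (\<forall>x\<in>U. \<exists>m \<iota>. \<iota> \<in> Delta_down m \<and> lc_pos \<iota> \<and> lc_ball x \<iota> \<subseteq> U)"

definition tau_iota :: "(int \<Rightarrow> real) topology" where
  "tau_iota = topology iota_open"

end

theory Submission
  imports Defs
begin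

text \<open>A ball of radius \<open>a \<epsilon>\<^sup>m\<close> around \<open>x\<close> contains all series agreeing with \<open>x\<close> up to
  degree \<open>m\<close> and consists of series agreeing with \<open>x\<close> below degree \<open>m\<close>. Since only
  exponents \<open>m \<ge> 0\<close> are admitted, the cylinders of series agreeing with \<open>x\<close> below degree
  \<open>n\<close>, \<open>n \<in> \<nat>\<close>, form a countable neighbourhood base at \<open>x\<close>. The cylinders of depth 1 already
  separate the real constants \<open>t \<epsilon>\<^sup>0\<close> from each other, so these form an uncountable discrete
  subspace, which no second-countable space contains.\<close>

definition lc_cylinder :: "(int \<Rightarrow> real) \<Rightarrow> nat \<Rightarrow> (int \<Rightarrow> real) set" where
  "lc_cylinder x n = {z \<in> LC. \<forall>j < int n. z j = x j}"

lemma lc_pos_uminus_imp_not_lc_pos: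
  assumes "lc_pos (lc_uminus x)"
  shows "\<not> lc_pos x"
proof
  assume "lc_pos x"
  then obtain i where i: "0 < x i" "\<forall>j<i. x j = 0"
    unfolding lc_pos_def by blast
  obtain i' where i': "x i' < 0" "\<forall>j<i'. x j = 0"
    using assms unfolding lc_pos_def lc_uminus_def by auto
  show False
    using i i' by (cases i i' rule: linorder_cases) auto
qed

lemma not_lc_pos_uminus_lc_abs: "\<not> lc_pos (lc_uminus (lc_abs x))"
proof (cases "lc_pos (lc_uminus x)")
  case True
  have "lc_uminus (lc_uminus x) = x"
    by (simp add: lc_uminus_def)
  with True show ?thesis
    using lc_pos_uminus_imp_not_lc_pos by (simp add: lc_abs_def)
qed (simp add: lc_abs_def)

lemma lc_abs_eq_0_iff: "lc_abs x i = 0 \<longleftrightarrow> x i = 0"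
  by (simp add: lc_abs_def lc_uminus_def)

lemma lc_ball_lc_mono_subset_lc_cylinder:
  "lc_ball x (lc_mono c (int n)) \<subseteq> lc_cylinder x n"
proof
  fix z assume z: "z \<in> lc_ball x (lc_mono c (int n))"
  define e where "e = lc_dist x z"
  obtain i where i: "0 < lc_mono c (int n) i - e i" "\<forall>j<i. lc_mono c (int n) j - e j = 0"
    using z unfolding lc_ball_def lc_less_def lc_pos_def lc_minus_def e_def by auto
  have "int n \<le> i"
  proof (rule ccontr)
    assume "\<not> int n \<le> i"
    then have "lc_pos (lc_uminus e)"
      using i unfolding lc_pos_def lc_uminus_def lc_mono_def by (intro exI[of _ i]) auto
    then show False
      using not_lc_pos_uminus_lc_abs by (simp add: e_def lc_dist_def)
  qed
  then have "e j = 0" if "j < int n" for j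
    using i(2)[rule_format, of j] that by (simp add: lc_mono_def)
  then show "z \<in> lc_cylinder x n"
    using z by (simp add: lc_cylinder_def lc_ball_def e_def lc_dist_def lc_abs_eq_0_iff
        lc_minus_def)
qed

lemma lc_cylinder_subset_lc_ball:
  assumes "0 < c" and "m < n"
  shows "lc_cylinder x n \<subseteq> lc_ball x (lc_mono c (int m))"
proof
  fix z assume z: "z \<in> lc_cylinder x n"
  have "lc_dist x z j = 0" if "j \<le> int m" for j
    using z that assms(2) by (simp add: lc_cylinder_def lc_dist_def lc_abs_eq_0_iff lc_minus_def)
  then have "lc_pos (lc_minus (lc_mono c (int m)) (lc_dist x z))"
    unfolding lc_pos_def lc_minus_def lc_mono_def using assms(1)
    by (intro exI[of _ "int m"]) auto
  then show "z \<in> lc_ball x (lc_mono c (int m))"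
    using z by (simp add: lc_ball_def lc_cylinder_def lc_less_def)
qed

lemma lc_cylinder_antimono: "m \<le> n \<Longrightarrow> lc_cylinder x n \<subseteq> lc_cylinder x m"
  by (auto simp: lc_cylinder_def)

lemma lc_cylinder_subset_if_mem: "y \<in> lc_cylinder x n \<Longrightarrow> lc_cylinder y n \<subseteq> lc_cylinder x n"
  by (auto simp: lc_cylinder_def)

lemma mem_lc_cylinder_self: "x \<in> LC \<Longrightarrow> x \<in> lc_cylinder x n"
  by (simp add: lc_cylinder_def)

lemma iota_open_iff_lc_cylinder:
  "iota_open U \<longleftrightarrow> U \<subseteq> LC \<and> (\<forall>x\<in>U. \<exists>n. lc_cylinder x n \<subseteq> U)"
proof (intro iffI conjI ballI)
  assume U: "iota_open U"
  then show "U \<subseteq> LC"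
    by (simp add: iota_open_def)
  fix x assume "x \<in> U"
  then obtain m r where r: "r \<in> Delta_down m" "lc_pos r" "lc_ball x r \<subseteq> U"
    using U by (auto simp: iota_open_def)
  then obtain k a where "r = lc_mono a (int k)"
    by (auto simp: Delta_down_def Delta_def)
  moreover from r(2) this have "0 < a"
    unfolding lc_pos_def lc_mono_def by (auto split: if_splits)
  ultimately have "lc_cylinder x (Suc k) \<subseteq> U"
    using lc_cylinder_subset_lc_ball[of a k "Suc k" x] r(3) by simp
  then show "\<exists>n. lc_cylinder x n \<subseteq> U" ..
next
  assume U: "U \<subseteq> LC \<and> (\<forall>x\<in>U. \<exists>n. lc_cylinder x n \<subseteq> U)"
  show "iota_open U"
    unfolding iota_open_def
  proof (intro conjI ballI)
    show "U \<subseteq> LC"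
      using U by simp
    fix x assume "x \<in> U"
    then obtain n where n: "lc_cylinder x n \<subseteq> U"
      using U by blast
    have "lc_mono 1 (int n) \<in> Delta n"
      unfolding Delta_def by (intro CollectI exI[of _ 1]) simp
    then have "lc_mono 1 (int n) \<in> Delta_down n"
      unfolding Delta_down_def by blast
    moreover have "lc_pos (lc_mono 1 (int n))"
      unfolding lc_pos_def lc_mono_def by (intro exI[of _ "int n"]) auto
    moreover have "lc_ball x (lc_mono 1 (int n)) \<subseteq> U"
      using lc_ball_lc_mono_subset_lc_cylinder n by blast
    ultimately show "\<exists>m r. r \<in> Delta_down m \<and> lc_pos r \<and> lc_ball x r \<subseteq> U"
      by blast
  qed
qed

lemma istopology_iota_open: "istopology iota_open"
  unfolding istopology_def iota_open_iff_lc_cylinder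
proof (intro conjI allI impI ballI)
  fix S T assume S: "S \<subseteq> LC \<and> (\<forall>x\<in>S. \<exists>n. lc_cylinder x n \<subseteq> S)"
    and T: "T \<subseteq> LC \<and> (\<forall>x\<in>T. \<exists>n. lc_cylinder x n \<subseteq> T)"
  show "S \<inter> T \<subseteq> LC"
    using S by auto
  fix x assume "x \<in> S \<inter> T"
  then obtain m n where "lc_cylinder x m \<subseteq> S" "lc_cylinder x n \<subseteq> T"
    using S T by blast
  then have "lc_cylinder x (max m n) \<subseteq> S \<inter> T"
    using lc_cylinder_antimono[of m "max m n" x] lc_cylinder_antimono[of n "max m n" x] by auto
  then show "\<exists>n. lc_cylinder x n \<subseteq> S \<inter> T" ..
next
  fix \<K> :: "(int \<Rightarrow> real) set set"
  assume \<K>: "\<forall>K\<in>\<K>. K \<subseteq> LC \<and> (\<forall>x\<in>K. \<exists>n. lc_cylinder x n \<subseteq> K)"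
  then show "\<Union>\<K> \<subseteq> LC"
    by auto
  fix x assume "x \<in> \<Union>\<K>"
  then obtain K where K: "K \<in> \<K>" "x \<in> K" ..
  with \<K> obtain n where "lc_cylinder x n \<subseteq> K"
    by blast
  with K(1) have "lc_cylinder x n \<subseteq> \<Union>\<K>"
    by blast
  then show "\<exists>n. lc_cylinder x n \<subseteq> \<Union>\<K>" ..
qed

lemma openin_tau_iota: "openin tau_iota = iota_open"
  by (simp add: tau_iota_def istopology_iota_open)

lemma openin_tau_iota_lc_cylinder: "openin tau_iota (lc_cylinder x n)"
  unfolding openin_tau_iota iota_open_iff_lc_cylinder
proof (intro conjI ballI)
  show "lc_cylinder x n \<subseteq> LC"
    by (auto simp: lc_cylinder_def)
  show "\<exists>m. lc_cylinder y m \<subseteq> lc_cylinder x n" if "y \<in> lc_cylinder x n" for y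
    using lc_cylinder_subset_if_mem[OF that] by blast
qed

lemma topspace_tau_iota: "topspace tau_iota = LC"
proof
  show "topspace tau_iota \<subseteq> LC"
    by (auto simp: topspace_def openin_tau_iota iota_open_def)
  have "openin tau_iota LC"
    unfolding openin_tau_iota iota_open_iff_lc_cylinder by (auto simp: lc_cylinder_def)
  then show "LC \<subseteq> topspace tau_iota"
    by (rule openin_subset)
qed

lemma first_countable_tau_iota: "first_countable tau_iota"
  unfolding first_countable_def topspace_tau_iota
proof
  fix x assume x: "x \<in> LC"
  have "\<exists>V\<in>range (lc_cylinder x). x \<in> V \<and> V \<subseteq> U"
    if U: "openin tau_iota U" "x \<in> U" for U
  proof -
    obtain n where "lc_cylinder x n \<subseteq> U"
      using U unfolding openin_tau_iota iota_open_iff_lc_cylinder by blast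
    then show ?thesis
      using mem_lc_cylinder_self[OF x] by blast
  qed
  then show "\<exists>\<B>. countable \<B> \<and> (\<forall>V\<in>\<B>. openin tau_iota V) \<and>
      (\<forall>U. openin tau_iota U \<and> x \<in> U \<longrightarrow> (\<exists>V\<in>\<B>. x \<in> V \<and> V \<subseteq> U))"
    using openin_tau_iota_lc_cylinder by (intro exI[of _ "range (lc_cylinder x)"]) auto
qed

lemma subtopology_tau_iota_constants:
  "subtopology tau_iota (range (\<lambda>t. lc_mono t 0)) = discrete_topology (range (\<lambda>t. lc_mono t 0))"
    (is "?X = _")
  unfolding eq_commute[of ?X] discrete_topology_unique_alt
proof (intro conjI ballI)
  show "topspace (subtopology tau_iota (range (\<lambda>t. lc_mono t 0))) \<subseteq> range (\<lambda>t. lc_mono t 0)"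
    by simp
  fix p assume "p \<in> range (\<lambda>t. lc_mono t 0)"
  then obtain t where p: "p = lc_mono t 0" ..
  have "{p} = lc_cylinder p 1 \<inter> range (\<lambda>t. lc_mono t 0)"
    unfolding p by (auto simp: lc_cylinder_def lc_mono_def LC_def)
  then show "openin (subtopology tau_iota (range (\<lambda>t. lc_mono t 0))) {p}"
    using openin_subtopology_Int[OF openin_tau_iota_lc_cylinder] by simp
qed

lemma not_second_countable_tau_iota: "\<not> second_countable tau_iota"
proof
  assume "second_countable tau_iota"
  then have "second_countable (discrete_topology (range (\<lambda>t. lc_mono t 0)))"
    unfolding subtopology_tau_iota_constants[symmetric] by (rule second_countable_subtopology)
  then have "countable (range (\<lambda>t. lc_mono t 0))"
    by (simp only: second_countable_discrete_topology)
  moreover have "inj (\<lambda>t. lc_mono t 0)"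
    by (rule injI) (metis lc_mono_def)
  ultimately have "countable (UNIV :: real set)"
    by (rule countable_image_inj_on)
  then show False
    using uncountable_UNIV_real by blast
qed

theorem mainTheorem4:
  shows "first_countable tau_iota \<and> \<not> second_countable tau_iota"
  using first_countable_tau_iota not_second_countable_tau_iota ..

end
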